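(* Let $\mathcal{J}$ be a Jordan subalgebra of $H(F_{2n},j)$ isomorphic to $F_n^{(+)}$. Then there is an automorphism $\varphi$ of $H(F_{2n},j)$ such that $$\varphi(\mathcal{J})=\left\{\begin{pmatrix} X & 0\\ 0 & X^t\end{pmatrix} : X\in F_n\right\}.$$
   Context: $F$ is an algebraically closed field of characteristic different from $2$. $F_k$ denotes the algebra of $k\times k$ matrices over $F$; $F_k^{(+)}$ is the Jordan algebra on $F_k$ with product $X\odot Y=\frac{XY+YX}{2}$; $H(F_{2n},j)$ is the Jordan subalgebra of $F_{2n}^{(+)}$ consisting of all matrices $\begin{pmatrix} A & B\\ C & A^t\end{pmatrix}$ with $A\in F_n$ arbitrary and $B,C\in F_n$ skew-symmetric. Automorphisms are Jordan algebra automorphisms. *)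

theory Defs
  imports "Jordan_Normal_Form.Matrix" "HOL-Computational_Algebra.Polynomial"
begin

definition alg_closed_field :: "'a::field itself \<Rightarrow> bool" where
  "alg_closed_field _ \<longleftrightarrow> (\<forall>p::'a poly. 0 < degree p \<longrightarrow> (\<exists>x. poly p x = 0))"

definition jprod :: "'a::field mat \<Rightarrow> 'a mat \<Rightarrow> 'a mat" where
  "jprod X Y = (1/2) \<cdot>\<^sub>m (X * Y + Y * X)"

definition Hj :: "nat \<Rightarrow> 'a::field mat set" where
  "Hj n = {four_block_mat A B C (transpose_mat A) | A B C.
            A \<in> carrier_mat n n \<and> B \<in> carrier_mat n n \<and> C \<in> carrier_mat n n \<and>
            transpose_mat B = - B \<and> transpose_mat C = - C}"

definition jordan_subalgebra :: "'a::field mat set \<Rightarrow> 'a mat set \<Rightarrow> bool" where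
  "jordan_subalgebra J S \<longleftrightarrow> J \<subseteq> S \<and> J \<noteq> {} \<and>
     (\<forall>x\<in>J. \<forall>y\<in>J. x + y \<in> J) \<and>
     (\<forall>c. \<forall>x\<in>J. c \<cdot>\<^sub>m x \<in> J) \<and>
     (\<forall>x\<in>J. \<forall>y\<in>J. jprod x y \<in> J)"

definition jordan_hom_on :: "'a::field mat set \<Rightarrow> ('a mat \<Rightarrow> 'a mat) \<Rightarrow> bool" where
  "jordan_hom_on S f \<longleftrightarrow>
     (\<forall>x\<in>S. \<forall>y\<in>S. f (x + y) = f x + f y) \<and>
     (\<forall>c. \<forall>x\<in>S. f (c \<cdot>\<^sub>m x) = c \<cdot>\<^sub>m f x) \<and>
     (\<forall>x\<in>S. \<forall>y\<in>S. f (jprod x y) = jprod (f x) (f y))"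

definition jordan_iso :: "'a::field mat set \<Rightarrow> 'a mat set \<Rightarrow> ('a mat \<Rightarrow> 'a mat) \<Rightarrow> bool" where
  "jordan_iso S T f \<longleftrightarrow> bij_betw f S T \<and> jordan_hom_on S f"

definition jordan_isomorphic :: "'a::field mat set \<Rightarrow> 'a mat set \<Rightarrow> bool" where
  "jordan_isomorphic S T \<longleftrightarrow> (\<exists>f. jordan_iso S T f)"

end

(*
  Transport the matrix units e_ij of F_n through the isomorphism to elements a_ij of J and let
  them act on V = F^(2n).  H(F_(2n), j) consists exactly of the matrices that are self-adjoint for
  the standard symplectic form s on V, and the a_ij satisfy the Jordan relations
  a_ij a_kl + a_kl a_ij = [j = k] a_il + [l = i] a_kj.  These relations alone produce vectors u, w
  with a_ij a_k0 u = [j = k] a_i0 u, a_ij a_0k w = [i = k] a_0j w and s(u, a_00 w) = 1; the vectors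
  a_i0 u and a_0j w then form a symplectic basis of V on which a_ij acts as diag(e_ij, e_ij^t).
  The matrix P with these columns is symplectic, so conjugation by P is an automorphism of
  H(F_(2n), j), and it maps J onto the block diagonal matrices diag(X, X^t).
*)
theory Submission
  imports Defs "Jordan_Normal_Form.Determinant" "HOL-Library.Function_Algebras"
begin

lemma sum_lessThan_add_nat:
  fixes f :: "nat \<Rightarrow> 'a::comm_monoid_add"
  shows "(\<Sum>i<m + n. f i) = (\<Sum>i<m. f i) + (\<Sum>i<n. f (m + i))"
  by (induction n) (simp_all add: add.assoc)

lemma less_add_self_cases:
  fixes i n :: nat
  assumes "i < n + n"
  obtains "i < n" | i' where "i = n + i'" "i' < n"
  using assms by (metis add_less_cancel_left le_Suc_ex not_less)

section \<open>The standard symplectic form\<close>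

(* Vectors of F^(2n) are functions nat => 'a of which only the values below 2n matter. *)
definition symp_form :: "nat \<Rightarrow> (nat \<Rightarrow> 'a::comm_ring_1) \<Rightarrow> (nat \<Rightarrow> 'a) \<Rightarrow> 'a" where
  "symp_form n x y = (\<Sum>r<n. x r * y (n + r) - x (n + r) * y r)"

lemma symp_form_add_left: "symp_form n (x + y) z = symp_form n x z + symp_form n y z"
  unfolding symp_form_def sum.distrib[symmetric] by (rule sum.cong) (simp_all add: algebra_simps)

lemma symp_form_add_right: "symp_form n z (x + y) = symp_form n z x + symp_form n z y"
  unfolding symp_form_def sum.distrib[symmetric] by (rule sum.cong) (simp_all add: algebra_simps)

lemma symp_form_scale_right: "symp_form n x (\<lambda>r. c * y r) = c * symp_form n x y"
  by (simp add: symp_form_def algebra_simps sum_distrib_left)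

lemma symp_form_zero_right [simp]: "symp_form n x 0 = 0"
  by (simp add: symp_form_def)

lemma symp_form_swap: "symp_form n x y = - symp_form n y x"
  by (simp add: symp_form_def algebra_simps sum_negf[symmetric] sum_subtractf[symmetric])

lemma symp_form_cong:
  "(\<And>r. r < n + n \<Longrightarrow> x r = x' r) \<Longrightarrow> (\<And>r. r < n + n \<Longrightarrow> y r = y' r) \<Longrightarrow>
    symp_form n x y = symp_form n x' y'"
  unfolding symp_form_def by (rule sum.cong) auto

definition unit_fun :: "nat \<Rightarrow> nat \<Rightarrow> 'a::zero_neq_one" where
  "unit_fun c = (\<lambda>r. if r = c then 1 else 0)"

lemma symp_form_unit_fun_left:
  assumes "c < n + n"
  shows "symp_form n (unit_fun c) y = (if c < n then y (n + c) else - y (c - n))"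
  using assms by (cases rule: less_add_self_cases)
    (simp_all add: symp_form_def unit_fun_def sum_subtractf if_distrib if_distribR cong: if_cong)

lemma symp_form_unit_fun_right:
  "c < n + n \<Longrightarrow> symp_form n x (unit_fun c) = (if c < n then - x (n + c) else x (c - n))"
  using symp_form_unit_fun_left[of c n x] symp_form_swap[of n x "unit_fun c"] by auto

lemma symp_form_unit_fun_unit_fun:
  assumes "c < n + n" "d < n + n"
  shows "symp_form n (unit_fun c) (unit_fun d) =
    (if d = n + c then 1 else if c = n + d then - 1 else (0::'a::comm_ring_1))"
  unfolding symp_form_unit_fun_left[OF assms(1)] using assms by (auto simp: unit_fun_def)

lemma symp_form_nondegenerate:
  fixes x :: "nat \<Rightarrow> 'a::comm_ring_1"
  assumes "x \<noteq> 0" and supp: "\<And>r. n + n \<le> r \<Longrightarrow> x r = 0"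
  shows "\<exists>y. symp_form n x y \<noteq> 0"
proof -
  obtain r where r: "x r \<noteq> 0" using assms(1) by (metis ext zero_fun_apply)
  then have "r < n + n" using supp by (meson not_less)
  then show ?thesis
  proof (cases rule: less_add_self_cases)
    case 1
    then show ?thesis using r symp_form_unit_fun_right[of "n + r" n x]
      by (intro exI[of _ "unit_fun (n + r)"]) simp
  next
    case (2 r')
    then show ?thesis using r symp_form_unit_fun_right[of r' n x]
      by (intro exI[of _ "unit_fun r'"]) simp
  qed
qed

lemma symp_form_expand_left: "symp_form n x y = (\<Sum>k<n + n. x k * symp_form n (unit_fun k) y)"
proof -
  have "(\<Sum>k<n + n. x k * symp_form n (unit_fun k) y) =
      (\<Sum>k<n + n. x k * (if k < n then y (n + k) else - y (k - n)))"
    by (rule sum.cong) (simp_all add: symp_form_unit_fun_left)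
  also have "\<dots> = symp_form n x y"
    unfolding sum_lessThan_add_nat symp_form_def by (simp add: sum_subtractf sum_negf)
  finally show ?thesis by simp
qed

definition mat_act :: "'a::comm_ring_1 mat \<Rightarrow> (nat \<Rightarrow> 'a) \<Rightarrow> nat \<Rightarrow> 'a" where
  "mat_act A x = (\<lambda>r. if r < dim_row A then (\<Sum>c<dim_col A. A $$ (r, c) * x c) else 0)"

lemma mat_act_add: "mat_act A (x + y) = mat_act A x + mat_act A y"
  unfolding mat_act_def by (rule ext) (simp add: distrib_left sum.distrib)

lemma mat_act_scale: "mat_act A (\<lambda>r. c * x r) = (\<lambda>r. c * mat_act A x r)"
  unfolding mat_act_def by (rule ext) (simp add: sum_distrib_left algebra_simps)

lemma mat_act_zero [simp]: "mat_act A 0 = 0"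
  unfolding mat_act_def by (rule ext) simp

lemma mat_act_outside: "dim_row A \<le> r \<Longrightarrow> mat_act A x r = 0"
  unfolding mat_act_def by simp

lemma mat_act_add_mat:
  "A \<in> carrier_mat m k \<Longrightarrow> B \<in> carrier_mat m k \<Longrightarrow> mat_act (A + B) x = mat_act A x + mat_act B x"
  unfolding mat_act_def by (rule ext) (simp add: distrib_right sum.distrib)

lemma mat_act_zero_mat [simp]: "mat_act (0\<^sub>m m k) x = 0"
  unfolding mat_act_def by (rule ext) simp

lemma mat_act_one: "mat_act (1\<^sub>m N) x = (\<lambda>r. if r < N then x r else 0)"
proof (rule ext)
  fix r
  have "(\<Sum>c<N. (if r = c then 1 else 0) * x c) = (\<Sum>c<N. if c = r then x c else 0)"
    by (rule sum.cong) auto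
  then show "mat_act (1\<^sub>m N) x r = (if r < N then x r else 0)"
    by (simp add: mat_act_def)
qed

lemma mat_act_mult:
  assumes A: "A \<in> carrier_mat m k" and B: "B \<in> carrier_mat k l"
  shows "mat_act (A * B) x = mat_act A (mat_act B x)"
proof (rule ext)
  fix r
  show "mat_act (A * B) x r = mat_act A (mat_act B x) r"
  proof (cases "r < m")
    case True
    have "mat_act (A * B) x r = (\<Sum>c<l. (\<Sum>j<k. A $$ (r, j) * B $$ (j, c)) * x c)"
      unfolding mat_act_def using A B True by (simp add: scalar_prod_def lessThan_atLeast0)
    also have "\<dots> = (\<Sum>j<k. A $$ (r, j) * (\<Sum>c<l. B $$ (j, c) * x c))"
      by (simp add: sum_distrib_left sum_distrib_right mult.assoc sum.swap[of _ "{..<l}"])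
    also have "\<dots> = mat_act A (mat_act B x) r"
      unfolding mat_act_def using A B True by simp
    finally show ?thesis .
  next
    case False
    then show ?thesis using A B unfolding mat_act_def by simp
  qed
qed

lemma mat_act_unit_fun:
  "A \<in> carrier_mat m k \<Longrightarrow> c < k \<Longrightarrow>
    mat_act A (unit_fun c) = (\<lambda>r. if r < m then A $$ (r, c) else 0)"
  unfolding mat_act_def unit_fun_def by (rule ext) (simp add: if_distrib cong: if_cong)

lemma mat_eqI_mat_act_unit_fun:
  assumes A: "A \<in> carrier_mat m k" and B: "B \<in> carrier_mat m k"
    and eq: "\<And>c. c < k \<Longrightarrow> mat_act A (unit_fun c) = mat_act B (unit_fun c)"
  shows "A = B"
proof (rule eq_matI)
  fix i j assume "i < dim_row B" "j < dim_col B"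
  then show "A $$ (i, j) = B $$ (i, j)"
    using B eq[of j] fun_cong[OF mat_act_unit_fun[OF A], of j i] mat_act_unit_fun[OF B, of j] by simp
qed (use A B in auto)

lemma symp_form_mat_act_one_left: "symp_form n (mat_act (1\<^sub>m (n + n)) x) y = symp_form n x y"
  by (rule symp_form_cong) (simp_all add: mat_act_one)

lemma symp_form_mat_act_one_right: "symp_form n x (mat_act (1\<^sub>m (n + n)) y) = symp_form n x y"
  by (rule symp_form_cong) (simp_all add: mat_act_one)

lemma symp_form_mat_act_expand:
  assumes A: "A \<in> carrier_mat (n + n) k" and B: "B \<in> carrier_mat (n + n) l"
  shows "symp_form n (mat_act A g) (mat_act B h) =
    (\<Sum>c<k. \<Sum>d<l. g c * h d * symp_form n (mat_act A (unit_fun c)) (mat_act B (unit_fun d)))"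
proof -
  define F where "F r c d = g c * h d * (A $$ (r, c) * B $$ (n + r, d) - A $$ (n + r, c) * B $$ (r, d))"
    for r c d
  have "symp_form n (mat_act A g) (mat_act B h) = (\<Sum>r<n. \<Sum>c<k. \<Sum>d<l. F r c d)"
    unfolding symp_form_def
  proof (rule sum.cong[OF refl])
    fix r assume "r \<in> {..<n}"
    then have "mat_act A g r * mat_act B h (n + r) - mat_act A g (n + r) * mat_act B h r =
      (\<Sum>c<k. A $$ (r, c) * g c) * (\<Sum>d<l. B $$ (n + r, d) * h d)
      - (\<Sum>c<k. A $$ (n + r, c) * g c) * (\<Sum>d<l. B $$ (r, d) * h d)"
      using A B by (simp add: mat_act_def)
    also have "\<dots> = (\<Sum>c<k. \<Sum>d<l. F r c d)"
      unfolding sum_product sum_subtractf[symmetric] F_def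
      by (rule sum.cong[OF refl], rule sum.cong[OF refl]) (simp add: algebra_simps)
    finally show "mat_act A g r * mat_act B h (n + r) - mat_act A g (n + r) * mat_act B h r =
      (\<Sum>c<k. \<Sum>d<l. F r c d)" .
  qed
  also have "\<dots> = (\<Sum>c<k. \<Sum>d<l. \<Sum>r<n. F r c d)"
    by (subst sum.swap) (simp add: sum.swap[of _ "{..<n}"])
  also have "\<dots> = (\<Sum>c<k. \<Sum>d<l. g c * h d * symp_form n (mat_act A (unit_fun c)) (mat_act B (unit_fun d)))"
    using A B by (simp add: F_def symp_form_def sum_distrib_left mat_act_unit_fun)
  finally show ?thesis .
qed

lemma symp_form_selfadjoint_iff_unit_fun:
  assumes Y: "Y \<in> carrier_mat (n + n) (n + n)"
  shows "(\<forall>g h. symp_form n (mat_act Y g) h = symp_form n g (mat_act Y h)) \<longleftrightarrow>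
    (\<forall>c<n + n. \<forall>d<n + n. symp_form n (mat_act Y (unit_fun c)) (unit_fun d) =
                         symp_form n (unit_fun c) (mat_act Y (unit_fun d)))"
    (is "?adj \<longleftrightarrow> ?units")
proof
  assume ?units
  have "symp_form n (mat_act Y g) h = symp_form n g (mat_act Y h)" for g h
  proof -
    have "symp_form n (mat_act Y g) h = symp_form n (mat_act Y g) (mat_act (1\<^sub>m (n + n)) h)"
      by (rule symp_form_mat_act_one_right[symmetric])
    also have "\<dots> = (\<Sum>c<n + n. \<Sum>d<n + n. g c * h d *
        symp_form n (mat_act Y (unit_fun c)) (mat_act (1\<^sub>m (n + n)) (unit_fun d)))"
      by (rule symp_form_mat_act_expand[OF Y one_carrier_mat])
    also have "\<dots> = (\<Sum>c<n + n. \<Sum>d<n + n. g c * h d *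
        symp_form n (mat_act (1\<^sub>m (n + n)) (unit_fun c)) (mat_act Y (unit_fun d)))"
      using \<open>?units\<close> by (simp add: symp_form_mat_act_one_left symp_form_mat_act_one_right)
    also have "\<dots> = symp_form n (mat_act (1\<^sub>m (n + n)) g) (mat_act Y h)"
      by (rule symp_form_mat_act_expand[OF one_carrier_mat Y, symmetric])
    finally show ?thesis by (simp add: symp_form_mat_act_one_left)
  qed
  then show ?adj by blast
qed blast

section \<open>H(F_2n, j) as the symplectically self-adjoint matrices\<close>

lemma Hj_carrier: "Y \<in> Hj n \<Longrightarrow> Y \<in> carrier_mat (n + n) (n + n)"
  unfolding Hj_def by auto

lemma Hj_entries:
  assumes "Y \<in> Hj n" "r < n" "c < n"
  shows "Y $$ (n + c, n + r) = Y $$ (r, c)" and "Y $$ (r, n + c) = - Y $$ (c, n + r)"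
    and "Y $$ (n + r, c) = - Y $$ (n + c, r)"
proof -
  obtain A B C where Y: "Y = four_block_mat A B C (transpose_mat A)"
    and car: "A \<in> carrier_mat n n" "B \<in> carrier_mat n n" "C \<in> carrier_mat n n"
    and skew: "transpose_mat B = - B" "transpose_mat C = - C"
    using assms(1) unfolding Hj_def by blast
  have "B $$ (c, r) = - B $$ (r, c)" "C $$ (c, r) = - C $$ (r, c)"
    using arg_cong[OF skew(1), of "\<lambda>M. M $$ (r, c)"] arg_cong[OF skew(2), of "\<lambda>M. M $$ (r, c)"]
      car assms(2,3) by simp_all
  then show "Y $$ (n + c, n + r) = Y $$ (r, c)" "Y $$ (r, n + c) = - Y $$ (c, n + r)"
    "Y $$ (n + r, c) = - Y $$ (n + c, r)"
    unfolding Y using car assms(2,3) by simp_all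
qed

lemma Hj_intro_entries:
  assumes car: "Y \<in> carrier_mat (n + n) (n + n)"
    and rel1: "\<And>r c. r < n \<Longrightarrow> c < n \<Longrightarrow> Y $$ (n + c, n + r) = Y $$ (r, c)"
    and rel2: "\<And>r c. r < n \<Longrightarrow> c < n \<Longrightarrow> Y $$ (r, n + c) = - Y $$ (c, n + r)"
    and rel3: "\<And>r c. r < n \<Longrightarrow> c < n \<Longrightarrow> Y $$ (n + r, c) = - Y $$ (n + c, r)"
  shows "Y \<in> Hj n"
proof -
  define A where "A = mat n n (\<lambda>(r, c). Y $$ (r, c))"
  define B where "B = mat n n (\<lambda>(r, c). Y $$ (r, n + c))"
  define C where "C = mat n n (\<lambda>(r, c). Y $$ (n + r, c))"
  have "Y = four_block_mat A B C (transpose_mat A)"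
  proof (rule eq_matI)
    fix i j assume "i < dim_row (four_block_mat A B C (transpose_mat A))"
      "j < dim_col (four_block_mat A B C (transpose_mat A))"
    then have "i < n + n" "j < n + n" by (simp_all add: A_def B_def)
    then show "Y $$ (i, j) = four_block_mat A B C (transpose_mat A) $$ (i, j)"
      by (elim less_add_self_cases) (simp_all add: A_def B_def C_def rel1)
  qed (use car in \<open>simp_all add: A_def B_def\<close>)
  moreover have "transpose_mat B = - B"
  proof (rule eq_matI)
    fix i j assume "i < dim_row (- B)" "j < dim_col (- B)"
    then show "transpose_mat B $$ (i, j) = (- B) $$ (i, j)" using rel2[of j i] by (simp add: B_def)
  qed (simp_all add: B_def)
  moreover have "transpose_mat C = - C"
  proof (rule eq_matI)
    fix i j assume "i < dim_row (- C)" "j < dim_col (- C)"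
    then show "transpose_mat C $$ (i, j) = (- C) $$ (i, j)" using rel3[of j i] by (simp add: C_def)
  qed (simp_all add: C_def)
  ultimately show ?thesis unfolding Hj_def A_def B_def C_def by fastforce
qed

lemma Hj_iff_unit_fun_selfadjoint:
  assumes Y: "Y \<in> carrier_mat (n + n) (n + n)"
  shows "Y \<in> Hj n \<longleftrightarrow> (\<forall>c<n + n. \<forall>d<n + n.
    symp_form n (mat_act Y (unit_fun c)) (unit_fun d) = symp_form n (unit_fun c) (mat_act Y (unit_fun d)))"
proof -
  let ?U = "\<lambda>c d. symp_form n (mat_act Y (unit_fun c)) (unit_fun d) =
                 symp_form n (unit_fun c) (mat_act Y (unit_fun d))"
  have U: "?U a b \<longleftrightarrow> Y $$ (n + a, b) = - Y $$ (n + b, a)"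
    "?U a (n + b) \<longleftrightarrow> Y $$ (n + a, n + b) = Y $$ (b, a)"
    "?U (n + a) b \<longleftrightarrow> Y $$ (n + b, n + a) = Y $$ (a, b)"
    "?U (n + a) (n + b) \<longleftrightarrow> Y $$ (b, n + a) = - Y $$ (a, n + b)"
    if "a < n" "b < n" for a b
    using that by (auto simp: symp_form_unit_fun_left symp_form_unit_fun_right mat_act_unit_fun[OF Y])
  have "Y \<in> Hj n \<longleftrightarrow> (\<forall>a<n. \<forall>b<n. ?U a b \<and> ?U a (n + b) \<and> ?U (n + a) b \<and> ?U (n + a) (n + b))"
  proof
    assume H: "Y \<in> Hj n"
    show "\<forall>a<n. \<forall>b<n. ?U a b \<and> ?U a (n + b) \<and> ?U (n + a) b \<and> ?U (n + a) (n + b)"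
    proof (intro allI impI)
      fix a b assume a: "a < n" and b: "b < n"
      show "?U a b \<and> ?U a (n + b) \<and> ?U (n + a) b \<and> ?U (n + a) (n + b)"
        unfolding U[OF a b] using Hj_entries(1,3)[OF H a b] Hj_entries(1,2)[OF H b a] by simp
    qed
  next
    assume "\<forall>a<n. \<forall>b<n. ?U a b \<and> ?U a (n + b) \<and> ?U (n + a) b \<and> ?U (n + a) (n + b)"
    then have rel: "Y $$ (n + a, b) = - Y $$ (n + b, a)" "Y $$ (n + b, n + a) = Y $$ (a, b)"
      "Y $$ (b, n + a) = - Y $$ (a, n + b)" if "a < n" "b < n" for a b
      using U[OF that] that by blast+
    show "Y \<in> Hj n" by (rule Hj_intro_entries[OF Y rel(2) rel(3) rel(1)])
  qed
  also have "\<dots> \<longleftrightarrow> (\<forall>c<n + n. \<forall>d<n + n. ?U c d)"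
    by (auto elim!: less_add_self_cases)
  finally show ?thesis .
qed

lemma Hj_iff_symp_form_selfadjoint:
  "Y \<in> Hj n \<longleftrightarrow> Y \<in> carrier_mat (n + n) (n + n) \<and>
     (\<forall>g h. symp_form n (mat_act Y g) h = symp_form n g (mat_act Y h))"
proof (cases "Y \<in> carrier_mat (n + n) (n + n)")
  case True
  then show ?thesis
    using Hj_iff_unit_fun_selfadjoint[OF True] symp_form_selfadjoint_iff_unit_fun[OF True] by simp
qed (use Hj_carrier in blast)

lemma symp_form_adjoint_of_inverse:
  assumes P: "P \<in> carrier_mat (n + n) (n + n)" and Q: "Q \<in> carrier_mat (n + n) (n + n)"
    and PQ: "P * Q = 1\<^sub>m (n + n)"
    and pres: "\<And>x y. symp_form n (mat_act P x) (mat_act P y) = symp_form n x y"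
  shows "symp_form n (mat_act Q x) y = symp_form n x (mat_act P y)"
    and "symp_form n (mat_act P x) y = symp_form n x (mat_act Q y)"
proof -
  have PQx: "mat_act P (mat_act Q z) = mat_act (1\<^sub>m (n + n)) z" for z
    using mat_act_mult[OF P Q, of z] PQ by simp
  show "symp_form n (mat_act Q x) y = symp_form n x (mat_act P y)"
    using pres[of "mat_act Q x" y] by (simp add: PQx symp_form_mat_act_one_left)
  show "symp_form n (mat_act P x) y = symp_form n x (mat_act Q y)"
    using pres[of x "mat_act Q y"] by (simp add: PQx symp_form_mat_act_one_right)
qed

lemma conj_mem_Hj:
  assumes A: "A \<in> carrier_mat (n + n) (n + n)" and B: "B \<in> carrier_mat (n + n) (n + n)"
    and AB: "\<And>x y. symp_form n (mat_act A x) y = symp_form n x (mat_act B y)"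
    and BA: "\<And>x y. symp_form n (mat_act B x) y = symp_form n x (mat_act A y)"
    and Y: "Y \<in> Hj n"
  shows "A * Y * B \<in> Hj n"
proof -
  have Yc: "Y \<in> carrier_mat (n + n) (n + n)"
    and Yadj: "\<And>g h. symp_form n (mat_act Y g) h = symp_form n g (mat_act Y h)"
    using Y by (simp_all add: Hj_iff_symp_form_selfadjoint)
  have act: "mat_act (A * Y * B) x = mat_act A (mat_act Y (mat_act B x))" for x
    unfolding mat_act_mult[OF mult_carrier_mat[OF A Yc] B] mat_act_mult[OF A Yc] ..
  have "symp_form n (mat_act (A * Y * B) g) h = symp_form n g (mat_act (A * Y * B) h)" for g h
    unfolding act AB Yadj BA ..
  then show ?thesis using A B Yc by (simp add: Hj_iff_symp_form_selfadjoint)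
qed

lemma jordan_hom_on_conj:
  fixes P Q :: "'a::field mat"
  assumes S: "S \<subseteq> carrier_mat N N" and P: "P \<in> carrier_mat N N" and Q: "Q \<in> carrier_mat N N"
    and PQ: "P * Q = 1\<^sub>m N"
  shows "jordan_hom_on S (\<lambda>Y. Q * Y * P)"
proof -
  have PQX: "P * (Q * X) = X" if "X \<in> carrier_mat N N" for X
    using that P Q PQ by (simp flip: assoc_mult_mat[of _ N N _ N _ N])
  show ?thesis
    unfolding jordan_hom_on_def
  proof (intro conjI ballI allI)
    fix Y Y' assume "Y \<in> S" "Y' \<in> S"
    then have Y: "Y \<in> carrier_mat N N" "Y' \<in> carrier_mat N N" using S by auto
    show "Q * (Y + Y') * P = Q * Y * P + Q * Y' * P"
      using Y P Q by (simp add: mult_add_distrib_mat[of _ N N] add_mult_distrib_mat[of _ N N])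
    show "Q * jprod Y Y' * P = jprod (Q * Y * P) (Q * Y' * P)"
      using Y P Q by (simp add: jprod_def PQX assoc_mult_mat[of _ N N _ N _ N] mult_smult_distrib[of _ N N _ N]
          mult_smult_assoc_mat[of _ N N _ N] mult_add_distrib_mat[of _ N N _ N]
          add_mult_distrib_mat[of _ N N _ _ N])
  next
    fix c Y assume "Y \<in> S"
    then show "Q * (c \<cdot>\<^sub>m Y) * P = c \<cdot>\<^sub>m (Q * Y * P)"
      using S P Q by (auto simp: mult_smult_distrib[of _ N N] mult_smult_assoc_mat[of _ N N])
  qed
qed

lemma jordan_iso_conj_Hj:
  assumes P: "P \<in> carrier_mat (n + n) (n + n)" and Q: "Q \<in> carrier_mat (n + n) (n + n)"
    and QP: "Q * P = 1\<^sub>m (n + n)" and PQ: "P * Q = 1\<^sub>m (n + n)"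
    and pres: "\<And>x y. symp_form n (mat_act P x) (mat_act P y) = symp_form n x y"
  shows "jordan_iso (Hj n) (Hj n) (\<lambda>Y. Q * Y * P)"
proof -
  note adj = symp_form_adjoint_of_inverse[OF P Q PQ pres]
  note assoc = assoc_mult_mat[of _ "n + n" "n + n" _ "n + n" _ "n + n"]
  have QPX: "Q * (P * X) = X" and PQX: "P * (Q * X) = X" if "X \<in> carrier_mat (n + n) (n + n)" for X
    using that P Q QP PQ by (simp_all flip: assoc)
  have cancel: "Q * (P * Y * Q) * P = Y" "P * (Q * Y * P) * Q = Y"
    if "Y \<in> carrier_mat (n + n) (n + n)" for Y
    using that P Q by (simp_all add: assoc QP PQ QPX PQX)
  have "bij_betw (\<lambda>Y. Q * Y * P) (Hj n) (Hj n)"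
  proof (rule bij_betw_byWitness[where f' = "\<lambda>Y. P * Y * Q"])
    show "\<forall>Y\<in>Hj n. P * (Q * Y * P) * Q = Y" "\<forall>Y\<in>Hj n. Q * (P * Y * Q) * P = Y"
      using cancel Hj_carrier by blast+
    show "(\<lambda>Y. Q * Y * P) ` Hj n \<subseteq> Hj n" "(\<lambda>Y. P * Y * Q) ` Hj n \<subseteq> Hj n"
      using conj_mem_Hj[OF Q P adj(1) adj(2)] conj_mem_Hj[OF P Q adj(2) adj(1)] by blast+
  qed
  moreover have "jordan_hom_on (Hj n) (\<lambda>Y. Q * Y * P)"
    by (rule jordan_hom_on_conj[OF _ P Q PQ]) (use Hj_carrier in blast)
  ultimately show ?thesis unfolding jordan_iso_def ..
qed

lemma symp_form_preserving_if_unit_fun: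
  assumes P: "P \<in> carrier_mat (n + n) (n + n)"
    and gram: "\<And>c d. c < n + n \<Longrightarrow> d < n + n \<Longrightarrow>
      symp_form n (mat_act P (unit_fun c)) (mat_act P (unit_fun d)) = symp_form n (unit_fun c) (unit_fun d)"
  shows "symp_form n (mat_act P x) (mat_act P y) = symp_form n x y"
proof -
  note one_left = symp_form_mat_act_one_left and one_right = symp_form_mat_act_one_right
  have "symp_form n (mat_act P x) (mat_act P y) = (\<Sum>c<n + n. \<Sum>d<n + n. x c * y d *
      symp_form n (mat_act P (unit_fun c)) (mat_act P (unit_fun d)))"
    by (rule symp_form_mat_act_expand[OF P P])
  also have "\<dots> = (\<Sum>c<n + n. \<Sum>d<n + n. x c * y d *
      symp_form n (mat_act (1\<^sub>m (n + n)) (unit_fun c)) (mat_act (1\<^sub>m (n + n)) (unit_fun d)))"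
    by (intro sum.cong refl) (simp add: gram one_left one_right)
  also have "\<dots> = symp_form n (mat_act (1\<^sub>m (n + n)) x) (mat_act (1\<^sub>m (n + n)) y)"
    by (rule symp_form_mat_act_expand[OF one_carrier_mat one_carrier_mat, symmetric])
  finally show ?thesis by (simp add: one_left one_right)
qed

lemma symp_form_preserving_mat_invertible:
  fixes P :: "'a::field mat"
  assumes P: "P \<in> carrier_mat (n + n) (n + n)"
    and pres: "\<And>x y. symp_form n (mat_act P x) (mat_act P y) = symp_form n x y"
  obtains Q where "Q \<in> carrier_mat (n + n) (n + n)" "Q * P = 1\<^sub>m (n + n)" "P * Q = 1\<^sub>m (n + n)"
proof -
  define b where "b c = mat_act P (unit_fun c)" for c
  define Q where "Q = mat (n + n) (n + n) (\<lambda>(r, k). if r < n then symp_form n (unit_fun k) (b (n + r))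
    else - symp_form n (unit_fun k) (b (r - n)))"
  have Q: "Q \<in> carrier_mat (n + n) (n + n)" by (simp add: Q_def)
  have "Q * P = 1\<^sub>m (n + n)"
  proof (rule eq_matI)
    fix r c assume "r < dim_row (1\<^sub>m (n + n))" "c < dim_col (1\<^sub>m (n + n))"
    then have r: "r < n + n" and c: "c < n + n" by auto
    have "(Q * P) $$ (r, c) = (\<Sum>k<n + n. Q $$ (r, k) * P $$ (k, c))"
      using r c P Q by (simp add: scalar_prod_def lessThan_atLeast0)
    also have "\<dots> = (\<Sum>k<n + n. b c k * (if r < n then symp_form n (unit_fun k) (b (n + r))
        else - symp_form n (unit_fun k) (b (r - n))))"
      by (rule sum.cong) (use r c P in \<open>auto simp: Q_def b_def mat_act_unit_fun\<close>)
    also have "\<dots> = (if r < n then symp_form n (b c) (b (n + r)) else - symp_form n (b c) (b (r - n)))"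
      by (cases "r < n") (simp_all add: symp_form_expand_left[of n "b c"] sum_negf)
    also have "\<dots> = (if r < n then symp_form n (unit_fun c) (unit_fun (n + r))
        else - symp_form n (unit_fun c) (unit_fun (r - n)))"
      by (simp add: b_def pres)
    also have "\<dots> = 1\<^sub>m (n + n) $$ (r, c)"
      using r c by (auto simp: symp_form_unit_fun_unit_fun)
    finally show "(Q * P) $$ (r, c) = 1\<^sub>m (n + n) $$ (r, c)" .
  qed (use P in \<open>simp_all add: Q_def\<close>)
  moreover from this have "P * Q = 1\<^sub>m (n + n)" by (rule mat_mult_left_right_inverse[OF Q P])
  ultimately show ?thesis using Q that by blast
qed

section \<open>Jordan relations of matrix units\<close>

lemma fun_double_eq_zero:
  fixes x :: "'b \<Rightarrow> 'a::field"
  assumes "(2::'a) \<noteq> 0" and "x + x = 0"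
  shows "x = 0"
proof
  fix r
  have "2 * x r = 0" using fun_cong[OF assms(2), of r] by simp
  then show "x r = 0 r" using assms(1) by simp
qed

(* T i j is the action of the image of the matrix unit e_ij. *)
locale jordan_units =
  fixes n :: nat and T :: "nat \<Rightarrow> nat \<Rightarrow> (nat \<Rightarrow> 'a::field) \<Rightarrow> nat \<Rightarrow> 'a"
  assumes T_add: "T i j (x + y) = T i j x + T i j y"
    and T_scale: "T i j (\<lambda>r. c * x r) = (\<lambda>r. c * T i j x r)"
    and T_jordan: "i < n \<Longrightarrow> j < n \<Longrightarrow> k < n \<Longrightarrow> l < n \<Longrightarrow>
      T i j (T k l x) + T k l (T i j x) = (if j = k then T i l x else 0) + (if l = i then T k j x else 0)"
    and two_neq_zero: "(2::'a) \<noteq> 0"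
begin

lemma T_zero [simp]: "T i j 0 = 0"
  using T_add[of i j 0 0] by simp

lemma T_minus: "T i j (- x) = - T i j x"
proof -
  have "T i j x + T i j (- x) = 0" using T_add[of i j x "- x"] by simp
  then show ?thesis by (rule minus_unique[symmetric])
qed

lemma double_eq_zero: "(x :: nat \<Rightarrow> 'a) + x = 0 \<Longrightarrow> x = 0"
  by (rule fun_double_eq_zero[OF two_neq_zero])

lemma eq_neg_self: "(x :: nat \<Rightarrow> 'a) = - x \<Longrightarrow> x = 0"
  using double_eq_zero[of x] by (metis add.right_inverse)

lemma T_idem:
  assumes "i < n"
  shows "T i i (T i i x) = T i i x"
proof -
  have "T i i (T i i x) + T i i (T i i x) = T i i x + T i i x"
    using T_jordan[OF assms assms assms assms, of x] by simp
  then have "(T i i (T i i x) - T i i x) + (T i i (T i i x) - T i i x) = 0"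
    by (simp add: algebra_simps)
  then have "T i i (T i i x) - T i i x = 0" by (rule double_eq_zero)
  then show ?thesis by simp
qed

lemma T_diag_eq_neg_imp_zero:
  assumes i: "i < n" and z: "T i i z = - z"
  shows "z = 0"
proof -
  have "T i i z = T i i (T i i z)" by (rule T_idem[OF i, symmetric])
  also have "\<dots> = - T i i z" by (simp only: z T_minus)
  finally have "T i i z = 0" by (rule eq_neg_self)
  then show ?thesis using z by simp
qed

lemma T_diag_orth:
  assumes i: "i < n" and j: "j < n" and ij: "i \<noteq> j"
  shows "T i i (T j j x) = 0"
proof -
  have anti: "T i i (T j j y) = - T j j (T i i y)" for y
    using T_jordan[OF i i j j, of y] ij by (simp add: eq_neg_iff_add_eq_0)
  have anti': "T j j (T i i x) = - T i i (T j j x)" using anti[of x] by simp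
  have "T i i (T j j x) = - T j j (T i i (T i i x))" using anti[of x] by (simp add: T_idem[OF i])
  also have "\<dots> = T i i (T j j (T i i x))" using anti[of "T i i x"] by simp
  also have "\<dots> = - T i i (T j j x)" unfolding anti' T_minus T_idem[OF i] ..
  finally show ?thesis by (rule eq_neg_self)
qed

definition column_generator :: "(nat \<Rightarrow> 'a) \<Rightarrow> bool" where
  "column_generator u \<longleftrightarrow> (\<forall>i<n. \<forall>j<n. \<forall>k<n. T i j (T k 0 u) = (if j = k then T i 0 u else 0))"

(* Such a u behaves like the first standard basis vector of the column module F^n. *)
context
  fixes u assumes n: "1 < n" and u00: "T 0 0 u = u" and u01: "T 0 1 u = 0"
begin

lemma T_kills_top:
  assumes i: "i < n" and j: "j < n" "j \<noteq> 0"
  shows "T i j u = 0"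
proof (cases "i = 0")
  case False
  have "T i j u + T 0 0 (T i j u) = 0"
    using T_jordan[OF i j(1), of 0 0 u] n j False u00 by auto
  then have "T 0 0 (T i j u) = - T i j u" by (rule minus_unique[symmetric])
  then show ?thesis using n by (intro T_diag_eq_neg_imp_zero) auto
next
  case i0: True
  show ?thesis
  proof (cases "j = 1")
    case True
    then show ?thesis using i0 u01 by simp
  next
    case False
    have "T 1 j u + T 0 0 (T 1 j u) = 0"
      using T_jordan[OF n j(1), of 0 0 u] n j False u00 by auto
    then have "T 0 0 (T 1 j u) = - T 1 j u" by (rule minus_unique[symmetric])
    then have "T 1 j u = 0" using n by (intro T_diag_eq_neg_imp_zero[of 0]) auto
    moreover have "T 0 1 (T 1 j u) + T 1 j (T 0 1 u) = T 0 j u"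
      using T_jordan[OF _ n n j(1), of 0 u] n j(2) by simp
    ultimately show ?thesis using i0 u01 by simp
  qed
qed

lemma T_diag_fixes_top_images:
  assumes i: "i < n" "i \<noteq> 0"
  shows "T i i (T i 0 u) = T i 0 u"
  using T_jordan[OF i(1) i(1) i(1), of 0 u] T_kills_top[OF i(1) i] n i(2) by simp

lemma T_top_images_square_zero:
  assumes i: "i < n" "i \<noteq> 0" and k: "k < n"
  shows "T k 0 (T i 0 u) = 0"
proof -
  have n0: "0 < n" using n by simp
  consider "k = i" | "k = 0" | "k \<noteq> i" "k \<noteq> 0" by blast
  then show ?thesis
  proof cases
    case 1
    have "T i 0 (T i 0 u) + T i 0 (T i 0 u) = 0" using T_jordan[OF i(1) n0 i(1) n0, of u] i by simp
    then show ?thesis using 1 by (simp add: double_eq_zero)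
  next
    case 2
    show ?thesis using T_diag_orth[OF n0 i(1), of "T i 0 u"] T_diag_fixes_top_images[OF i] 2 i by simp
  next
    case 3
    have "T k 0 (T i 0 u) + T i i (T k 0 (T i 0 u)) = 0"
      using T_jordan[OF k n0 i(1) i(1), of "T i 0 u"] 3 i T_diag_fixes_top_images[OF i] by simp
    then have "T i i (T k 0 (T i 0 u)) = - T k 0 (T i 0 u)" by (rule minus_unique[symmetric])
    then show ?thesis by (rule T_diag_eq_neg_imp_zero[OF i(1)])
  qed
qed

lemma column_generator_if_top: "column_generator u"
  unfolding column_generator_def
proof (intro allI impI)
  fix i j k assume i: "i < n" and j: "j < n" and k: "k < n"
  have n0: "0 < n" using n by simp
  show "T i j (T k 0 u) = (if j = k then T i 0 u else 0)"
  proof (cases "j = 0")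
    case False
    then show ?thesis using T_jordan[OF i j k n0, of u] T_kills_top[OF i j False] T_kills_top[OF k j False]
      by simp
  next
    case True
    then show ?thesis using u00 T_top_images_square_zero[OF k _ i] by (cases "k = 0") auto
  qed
qed

end

lemma column_generatorI:
  assumes "T 0 0 u = u" and "1 < n \<Longrightarrow> T 0 1 u = 0"
  shows "column_generator u"
proof (cases "1 < n")
  case True
  then show ?thesis using assms column_generator_if_top by blast
next
  case False
  show ?thesis
    unfolding column_generator_def
  proof (intro allI impI)
    fix i j k assume "i < n" "j < n" "k < n"
    moreover from this have "i = 0" "j = 0" "k = 0" using False by auto
    ultimately show "T i j (T k 0 u) = (if j = k then T i 0 u else 0)"
      using assms(1) T_idem[of 0 u] by simp
  qed
qed

lemma top_of_T00_fixed:
  assumes n: "1 < n" and z: "T 0 0 z = z"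
  shows "T 0 0 (T 0 1 (T 1 0 z)) = T 0 1 (T 1 0 z)" and "T 0 1 (T 0 1 (T 1 0 z)) = 0"
proof -
  have n0: "0 < n" using n by simp
  have "T 0 0 (T 1 0 z) = 0"
    using T_jordan[OF n0 n0 n n0, of z] z by simp
  then show "T 0 0 (T 0 1 (T 1 0 z)) = T 0 1 (T 1 0 z)"
    using T_jordan[OF n0 n0 n0 n, of "T 1 0 z"] by simp
  have "T 0 1 (T 0 1 (T 1 0 z)) + T 0 1 (T 0 1 (T 1 0 z)) = 0"
    using T_jordan[OF n0 n n0 n, of "T 1 0 z"] by simp
  then show "T 0 1 (T 0 1 (T 1 0 z)) = 0" by (rule double_eq_zero)
qed

lemma T00_fixed_split:
  assumes n: "1 < n" and z: "T 0 0 z = z"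
  shows "T 0 1 (T 1 0 z) + T 1 0 (T 0 1 z) = z"
  using T_jordan[of 0 1 1 0 z] T_diag_orth[OF n _, of 0 z] n z by simp

definition row_generator :: "(nat \<Rightarrow> 'a) \<Rightarrow> bool" where
  "row_generator w \<longleftrightarrow> (\<forall>i<n. \<forall>j<n. \<forall>k<n. T i j (T 0 k w) = (if i = k then T 0 j w else 0))"

lemma row_generator_scale: "row_generator w \<Longrightarrow> row_generator (\<lambda>r. c * w r)"
  by (auto simp: row_generator_def T_scale zero_fun_def)

end

lemma jordan_units_transpose:
  assumes "jordan_units n T"
  shows "jordan_units n (\<lambda>i j. T j i)"
proof
  fix i j k l x assume "i < n" "j < n" "k < n" "l < n"
  then have "T l k (T j i x) + T j i (T l k x) =
      (if k = j then T l i x else 0) + (if i = l then T j k x else 0)"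
    by (intro jordan_units.T_jordan[OF assms])
  then show "T j i (T l k x) + T l k (T j i x) =
      (if j = k then T l i x else 0) + (if l = i then T j k x else 0)"
    by (simp add: add.commute eq_commute[of i l] eq_commute[of j k])
qed (use jordan_units.T_add[OF assms] jordan_units.T_scale[OF assms]
    jordan_units.two_neq_zero[OF assms] in auto)

lemma (in jordan_units) row_generatorI:
  assumes "T 0 0 w = w" and "1 < n \<Longrightarrow> T 1 0 w = 0"
  shows "row_generator w"
proof -
  interpret tr: jordan_units n "\<lambda>i j. T j i"
    by (rule jordan_units_transpose[OF jordan_units_axioms])
  have "tr.column_generator w" using assms by (intro tr.column_generatorI) simp_all
  then show ?thesis unfolding row_generator_def tr.column_generator_def by blast
qed

locale symp_jordan_units = jordan_units +
  assumes T_selfadjoint: "i < n \<Longrightarrow> j < n \<Longrightarrow> symp_form n (T i j x) y = symp_form n x (T i j y)"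
    and T_support: "n + n \<le> r \<Longrightarrow> T i j x r = 0"
begin

lemma symp_form_T_self:
  assumes "i < n" "j < n"
  shows "symp_form n x (T i j x) = 0"
proof -
  have "symp_form n x (T i j x) = symp_form n (T i j x) x" by (rule T_selfadjoint[OF assms, symmetric])
  also have "\<dots> = - symp_form n x (T i j x)" by (rule symp_form_swap)
  finally have "symp_form n x (T i j x) + symp_form n x (T i j x) = 0"
    by (simp only: eq_neg_iff_add_eq_0)
  then show ?thesis using two_neq_zero by simp
qed

lemma symp_jordan_units_transpose: "symp_jordan_units n (\<lambda>i j. T j i)"
proof (rule symp_jordan_units.intro)
  show "jordan_units n (\<lambda>i j. T j i)" by (rule jordan_units_transpose[OF jordan_units_axioms])
  show "symp_jordan_units_axioms n (\<lambda>i j. T j i)"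
    by unfold_locales (simp_all add: T_selfadjoint T_support)
qed

definition dual_generators :: "(nat \<Rightarrow> 'a) \<Rightarrow> (nat \<Rightarrow> 'a) \<Rightarrow> bool" where
  "dual_generators u w \<longleftrightarrow> column_generator u \<and> row_generator w \<and> symp_form n u (T 0 0 w) = 1"

lemma T00_fixed_pairing_exists:
  assumes n: "0 < n" and g: "T 0 0 g \<noteq> 0"
  obtains z1 z2 where "T 0 0 z1 = z1" "T 0 0 z2 = z2" "symp_form n z1 z2 \<noteq> 0"
proof -
  obtain h where h: "symp_form n (T 0 0 g) h \<noteq> 0"
    using symp_form_nondegenerate[OF g] T_support by blast
  have "symp_form n (T 0 0 g) (T 0 0 h) = symp_form n (T 0 0 g) h"
    using T_selfadjoint[OF n n, of "T 0 0 g" h] T_idem[OF n] by simp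
  then show ?thesis using that[of "T 0 0 g" "T 0 0 h"] h T_idem[OF n] by simp
qed

lemma dual_generators_if_pairing:
  assumes u: "column_generator u" and w: "row_generator w" "T 0 0 w = w"
    and uw: "symp_form n u w \<noteq> 0"
  shows "\<exists>w'. dual_generators u w'"
proof -
  define w' where "w' = (\<lambda>r. (1 / symp_form n u w) * w r)"
  have "T 0 0 w' = w'" unfolding w'_def T_scale w(2) ..
  moreover have "symp_form n u w' = (1 / symp_form n u w) * symp_form n u w"
    unfolding w'_def by (rule symp_form_scale_right)
  ultimately have "symp_form n u (T 0 0 w') = 1" using uw by simp
  then show ?thesis using u row_generator_scale[OF w(1)] unfolding dual_generators_def w'_def by blast
qed

lemma generators_pairing_exists:
  assumes n: "0 < n" and g: "T 0 0 g \<noteq> 0"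
  shows "\<exists>u w. column_generator u \<and> row_generator w \<and> T 0 0 w = w \<and> symp_form n u w \<noteq> 0"
proof -
  interpret tr: symp_jordan_units n "\<lambda>i j. T j i" by (rule symp_jordan_units_transpose)
  obtain z1 z2 where z: "T 0 0 z1 = z1" "T 0 0 z2 = z2" and z12: "symp_form n z1 z2 \<noteq> 0"
    using T00_fixed_pairing_exists[OF n g] .
  show ?thesis
  proof (cases "1 < n")
    case False
    then show ?thesis using z z12 column_generatorI row_generatorI by blast
  next
    case n1: True
    define u1 u2 where "u1 = T 0 1 (T 1 0 z1)" and "u2 = T 0 1 (T 1 0 z2)"
    define w1 w2 where "w1 = T 1 0 (T 0 1 z1)" and "w2 = T 1 0 (T 0 1 z2)"
    have u: "T 0 0 u1 = u1" "T 0 1 u1 = 0" "T 0 0 u2 = u2" "T 0 1 u2 = 0"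
      unfolding u1_def u2_def using top_of_T00_fixed[OF n1] z by simp_all
    have w: "T 0 0 w1 = w1" "T 1 0 w1 = 0" "T 0 0 w2 = w2" "T 1 0 w2 = 0"
      unfolding w1_def w2_def using tr.top_of_T00_fixed[OF n1] z by simp_all
    have "symp_form n u1 u2 = symp_form n (T 1 0 z1) (T 0 1 u2)"
      unfolding u1_def using T_selfadjoint[OF _ n1] n by simp
    then have uu: "symp_form n u1 u2 = 0" using u by simp
    have "symp_form n w1 w2 = symp_form n (T 0 1 z1) (T 1 0 w2)"
      unfolding w1_def using T_selfadjoint[OF n1] n by simp
    then have ww: "symp_form n w1 w2 = 0" using w by simp
    have "z1 = u1 + w1" "z2 = u2 + w2"
      unfolding u1_def u2_def w1_def w2_def using T00_fixed_split[OF n1] z by simp_all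
    then have "symp_form n z1 z2 = symp_form n u1 w2 + symp_form n w1 u2"
      using uu ww by (simp add: symp_form_add_left symp_form_add_right)
    then consider "symp_form n u1 w2 \<noteq> 0" | "symp_form n u2 w1 \<noteq> 0"
      using z12 symp_form_swap[of n w1 u2] by fastforce
    moreover have gens: "column_generator u1" "column_generator u2" "row_generator w1" "row_generator w2"
      using u w by (simp_all add: column_generatorI row_generatorI)
    ultimately show ?thesis
    proof cases
      case 1
      then show ?thesis using gens(1,4) w(3) by (intro exI[of _ u1] exI[of _ w2]) simp
    next
      case 2
      then show ?thesis using gens(2,3) w(1) by (intro exI[of _ u2] exI[of _ w1]) simp
    qed
  qed
qed

lemma dual_generators_exist:
  assumes "0 < n" "T 0 0 g \<noteq> 0"
  obtains u w where "dual_generators u w"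
proof -
  obtain u w where "column_generator u" "row_generator w" "T 0 0 w = w" "symp_form n u w \<noteq> 0"
    using generators_pairing_exists[OF assms] by blast
  from dual_generators_if_pairing[OF this] show ?thesis using that by blast
qed

definition generator_basis :: "(nat \<Rightarrow> 'a) \<Rightarrow> (nat \<Rightarrow> 'a) \<Rightarrow> nat \<Rightarrow> nat \<Rightarrow> 'a" where
  "generator_basis u w c = (if c < n then T c 0 u else T 0 (c - n) w)"

lemma generator_basis_support: "n + n \<le> r \<Longrightarrow> generator_basis u w c r = 0"
  unfolding generator_basis_def using T_support by simp

context
  fixes u w assumes uw: "dual_generators u w"
begin

lemma T_column_images:
  "i < n \<Longrightarrow> j < n \<Longrightarrow> k < n \<Longrightarrow> T i j (T k 0 u) = (if j = k then T i 0 u else 0)"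
  using uw unfolding dual_generators_def column_generator_def by blast

lemma T_row_images:
  "i < n \<Longrightarrow> j < n \<Longrightarrow> k < n \<Longrightarrow> T i j (T 0 k w) = (if i = k then T 0 j w else 0)"
  using uw unfolding dual_generators_def row_generator_def by blast

lemma symp_form_column_images: "i < n \<Longrightarrow> j < n \<Longrightarrow> symp_form n (T i 0 u) (T j 0 u) = 0"
  using T_selfadjoint[of i 0 u "T j 0 u"] T_column_images[of i 0 j] symp_form_T_self[of i 0 u] by auto

lemma symp_form_column_row_images:
  assumes "i < n" "j < n"
  shows "symp_form n (T i 0 u) (T 0 j w) = (if i = j then 1 else 0)"
  using T_selfadjoint[of i 0 u "T 0 j w"] T_row_images[of i 0 j] uw assms
  by (auto simp: dual_generators_def)

lemma symp_form_row_images: "i < n \<Longrightarrow> j < n \<Longrightarrow> symp_form n (T 0 i w) (T 0 j w) = 0"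
  using T_selfadjoint[of 0 i w "T 0 j w"] T_row_images[of 0 i j] symp_form_T_self[of 0 i w] by auto

lemma symp_form_generator_basis:
  assumes "c < n + n" "d < n + n"
  shows "symp_form n (generator_basis u w c) (generator_basis u w d) = symp_form n (unit_fun c) (unit_fun d)"
proof -
  have row_col: "symp_form n (T 0 j w) (T i 0 u) = (if i = j then - 1 else 0)" if "i < n" "j < n" for i j
    using symp_form_column_row_images[OF that] symp_form_swap[of n "T 0 j w" "T i 0 u"] by simp
  show ?thesis
    using assms by (elim less_add_self_cases) (simp_all add: generator_basis_def symp_form_unit_fun_unit_fun
        symp_form_column_images symp_form_column_row_images symp_form_row_images row_col)
qed

lemma T_generator_basis:
  assumes "i < n" "j < n" "c < n + n"
  shows "T i j (generator_basis u w c) = (if c < n then (if c = j then generator_basis u w i else 0)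
    else (if c - n = i then generator_basis u w (n + j) else 0))"
  using assms T_column_images T_row_images by (auto simp: generator_basis_def)

end

end

section \<open>Jordan copies of F_n inside H(F_2n, j)\<close>

definition mat_unit :: "nat \<Rightarrow> nat \<Rightarrow> nat \<Rightarrow> 'a::zero_neq_one mat" where
  "mat_unit n i j = mat n n (\<lambda>(r, c). if r = i \<and> c = j then 1 else 0)"

lemma mat_unit_carrier [simp]: "mat_unit n i j \<in> carrier_mat n n"
  unfolding mat_unit_def by simp

lemma mat_unit_mult:
  assumes "j < n" "k < n"
  shows "mat_unit n i j * (mat_unit n k l :: 'a::semiring_1 mat) = (if j = k then mat_unit n i l else 0\<^sub>m n n)"
proof (rule eq_matI)
  fix r c assume "r < dim_row (if j = k then mat_unit n i l else (0\<^sub>m n n :: 'a mat))"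
    "c < dim_col (if j = k then mat_unit n i l else (0\<^sub>m n n :: 'a mat))"
  then have r: "r < n" and c: "c < n" by (auto simp: mat_unit_def split: if_splits)
  have "(mat_unit n i j * (mat_unit n k l :: 'a mat)) $$ (r, c) =
      (\<Sum>m<n. (if r = i \<and> m = j then 1 else 0) * (if m = k \<and> c = l then 1 else (0::'a)))"
    using r c unfolding mat_unit_def by (simp add: scalar_prod_def lessThan_atLeast0)
  also have "\<dots> = (\<Sum>m<n. if m = j then (if r = i \<and> j = k \<and> c = l then 1 else 0) else (0::'a))"
    by (rule sum.cong) auto
  also have "\<dots> = (if j = k then mat_unit n i l else (0\<^sub>m n n :: 'a mat)) $$ (r, c)"
    using assms r c unfolding mat_unit_def by auto
  finally show "(mat_unit n i j * mat_unit n k l) $$ (r, c) =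
      (if j = k then mat_unit n i l else (0\<^sub>m n n :: 'a mat)) $$ (r, c)" .
qed (auto simp: mat_unit_def)

lemma mat_linear_eqI_on_units:
  fixes F G :: "'a::field mat \<Rightarrow> 'a mat"
  assumes F_add: "\<And>X Y. X \<in> carrier_mat n n \<Longrightarrow> Y \<in> carrier_mat n n \<Longrightarrow> F (X + Y) = F X + F Y"
    and G_add: "\<And>X Y. X \<in> carrier_mat n n \<Longrightarrow> Y \<in> carrier_mat n n \<Longrightarrow> G (X + Y) = G X + G Y"
    and F_smult: "\<And>c X. X \<in> carrier_mat n n \<Longrightarrow> F (c \<cdot>\<^sub>m X) = c \<cdot>\<^sub>m F X"
    and G_smult: "\<And>c X. X \<in> carrier_mat n n \<Longrightarrow> G (c \<cdot>\<^sub>m X) = c \<cdot>\<^sub>m G X"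
    and F_carrier: "\<And>X. X \<in> carrier_mat n n \<Longrightarrow> F X \<in> carrier_mat p q"
    and G_carrier: "\<And>X. X \<in> carrier_mat n n \<Longrightarrow> G X \<in> carrier_mat p q"
    and units: "\<And>i j. i < n \<Longrightarrow> j < n \<Longrightarrow> F (mat_unit n i j) = G (mat_unit n i j)"
    and X: "X \<in> carrier_mat n n"
  shows "F X = G X"
proof -
  define R where "R K = mat n n (\<lambda>(r, c). if (r, c) \<in> K then X $$ (r, c) else 0)" for K
  have R_carrier: "R K \<in> carrier_mat n n" for K by (simp add: R_def)
  have zero: "H (0\<^sub>m n n) = 0\<^sub>m p q"
    if "\<And>c X. X \<in> carrier_mat n n \<Longrightarrow> H (c \<cdot>\<^sub>m X) = c \<cdot>\<^sub>m H X"
      "\<And>X. X \<in> carrier_mat n n \<Longrightarrow> H X \<in> carrier_mat p q" for H :: "'a mat \<Rightarrow> 'a mat"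
  proof (rule eq_matI)
    fix i j assume "i < dim_row (0\<^sub>m p q)" "j < dim_col (0\<^sub>m p q)"
    moreover have "H (0\<^sub>m n n) = 0 \<cdot>\<^sub>m H (0\<^sub>m n n)" using that(1)[of "0\<^sub>m n n" 0] by simp
    then have "H (0\<^sub>m n n) $$ (i, j) = (0 \<cdot>\<^sub>m H (0\<^sub>m n n)) $$ (i, j)" by (rule arg_cong)
    ultimately show "H (0\<^sub>m n n) $$ (i, j) = 0\<^sub>m p q $$ (i, j)"
      using that(2)[of "0\<^sub>m n n"] by simp
  qed (use that(2)[of "0\<^sub>m n n"] in auto)
  have restrict: "F (R K) = G (R K)" if "finite K" "K \<subseteq> {..<n} \<times> {..<n}" for K
    using that
  proof (induction K rule: finite_induct)
    case empty
    have "R {} = 0\<^sub>m n n" by (auto simp: R_def)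
    then show ?case using zero[OF F_smult F_carrier] zero[OF G_smult G_carrier] by simp
  next
    case (insert p K)
    obtain i j where p: "p = (i, j)" and ij: "i < n" "j < n" using insert.prems by auto
    have "R (insert p K) = R K + X $$ p \<cdot>\<^sub>m mat_unit n i j"
      using insert.hyps(2) p by (auto simp: R_def mat_unit_def intro!: eq_matI)
    then show ?case
      using insert ij by (simp add: F_add G_add F_smult G_smult R_carrier units)
  qed
  have "R ({..<n} \<times> {..<n}) = X" using X by (auto simp: R_def intro!: eq_matI)
  moreover have "F (R ({..<n} \<times> {..<n})) = G (R ({..<n} \<times> {..<n}))" by (rule restrict) auto
  ultimately show ?thesis by simp
qed

definition diag_embed :: "nat \<Rightarrow> 'a::{zero, uminus} mat \<Rightarrow> 'a mat" where
  "diag_embed n X = four_block_mat X (0\<^sub>m n n) (0\<^sub>m n n) (transpose_mat X)"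

lemma diag_embed_carrier: "X \<in> carrier_mat n n \<Longrightarrow> diag_embed n X \<in> carrier_mat (n + n) (n + n)"
  unfolding diag_embed_def by simp

lemma diag_embed_add:
  "X \<in> carrier_mat n n \<Longrightarrow> Y \<in> carrier_mat n n \<Longrightarrow>
    diag_embed n (X + Y) = diag_embed n X + diag_embed n (Y :: 'a::ring mat)"
  unfolding diag_embed_def by (subst add_four_block_mat[of _ n n _ n _ n]) (auto simp: transpose_add)

lemma diag_embed_smult:
  "X \<in> carrier_mat n n \<Longrightarrow> diag_embed n (c \<cdot>\<^sub>m X) = c \<cdot>\<^sub>m diag_embed n (X :: 'a::ring mat)"
  unfolding diag_embed_def
  by (subst smult_four_block_mat[of _ n n _ n _ n]) (auto intro!: eq_matI)

lemma mat_act_diag_embed_mat_unit: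
  assumes "i < n" "j < n" "c < n + n"
  shows "mat_act (diag_embed n (mat_unit n i j)) (unit_fun c) =
    (if c < n then (if c = j then unit_fun i else 0) else (if c - n = i then unit_fun (n + j) else 0))"
  unfolding mat_act_unit_fun[OF diag_embed_carrier[OF mat_unit_carrier] assms(3)]
  using assms(3)
  by (cases rule: less_add_self_cases)
    (use assms(1,2) in \<open>auto simp: diag_embed_def mat_unit_def unit_fun_def intro!: ext elim!: less_add_self_cases\<close>)

locale Hj_representation =
  fixes n :: nat and f :: "'a::field mat \<Rightarrow> 'a mat"
  assumes two_neq_zero: "(2::'a) \<noteq> 0"
    and hom: "jordan_hom_on (carrier_mat n n) f"
    and maps_Hj: "X \<in> carrier_mat n n \<Longrightarrow> f X \<in> Hj n"
    and inj: "inj_on f (carrier_mat n n)"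
begin

lemma f_carrier: "X \<in> carrier_mat n n \<Longrightarrow> f X \<in> carrier_mat (n + n) (n + n)"
  using maps_Hj Hj_carrier by blast

lemma f_add: "X \<in> carrier_mat n n \<Longrightarrow> Y \<in> carrier_mat n n \<Longrightarrow> f (X + Y) = f X + f Y"
  and f_smult: "X \<in> carrier_mat n n \<Longrightarrow> f (c \<cdot>\<^sub>m X) = c \<cdot>\<^sub>m f X"
  and f_jprod: "X \<in> carrier_mat n n \<Longrightarrow> Y \<in> carrier_mat n n \<Longrightarrow> f (jprod X Y) = jprod (f X) (f Y)"
  using hom unfolding jordan_hom_on_def by blast+

lemma f_zero: "f (0\<^sub>m n n) = 0\<^sub>m (n + n) (n + n)"
proof -
  have "f (0\<^sub>m n n) = f (0 \<cdot>\<^sub>m 0\<^sub>m n n)" by simp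
  also have "\<dots> = 0 \<cdot>\<^sub>m f (0\<^sub>m n n)" by (rule f_smult) simp
  also have "\<dots> = 0\<^sub>m (n + n) (n + n)" using f_carrier[of "0\<^sub>m n n"] by (intro eq_matI) auto
  finally show ?thesis .
qed

lemma f_anticommutator:
  assumes X: "X \<in> carrier_mat n n" and Y: "Y \<in> carrier_mat n n"
  shows "f X * f Y + f Y * f X = f (X * Y + Y * X)"
proof -
  have XY: "X * Y + Y * X \<in> carrier_mat n n" using X Y by simp
  note car = f_carrier[OF X] f_carrier[OF Y] f_carrier[OF XY]
  have half: "(1 / 2 :: 'a) \<cdot>\<^sub>m f (X * Y + Y * X) = (1 / 2) \<cdot>\<^sub>m (f X * f Y + f Y * f X)"
    using f_jprod[OF X Y] f_smult[OF XY, of "1 / 2"] by (simp add: jprod_def)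
  show ?thesis
  proof (rule eq_matI)
    fix i j assume "i < dim_row (f (X * Y + Y * X))" "j < dim_col (f (X * Y + Y * X))"
    moreover have "((1 / 2 :: 'a) \<cdot>\<^sub>m f (X * Y + Y * X)) $$ (i, j) =
        ((1 / 2) \<cdot>\<^sub>m (f X * f Y + f Y * f X)) $$ (i, j)"
      by (rule arg_cong[OF half])
    ultimately show "(f X * f Y + f Y * f X) $$ (i, j) = f (X * Y + Y * X) $$ (i, j)"
      using car two_neq_zero by simp
  qed (use car in simp_all)
qed

definition unit_action :: "nat \<Rightarrow> nat \<Rightarrow> (nat \<Rightarrow> 'a) \<Rightarrow> nat \<Rightarrow> 'a" where
  "unit_action i j = mat_act (f (mat_unit n i j))"

lemma unit_action_jordan:
  assumes h: "i < n" "j < n" "k < n" "l < n"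
  shows "unit_action i j (unit_action k l x) + unit_action k l (unit_action i j x) =
    (if j = k then unit_action i l x else 0) + (if l = i then unit_action k j x else 0)"
proof -
  let ?a = "\<lambda>i j. f (mat_unit n i j)" and ?O = "0\<^sub>m (n + n) (n + n) :: 'a mat"
  have car: "?a i j \<in> carrier_mat (n + n) (n + n)" for i j by (simp add: f_carrier)
  have "unit_action i j (unit_action k l x) + unit_action k l (unit_action i j x) =
      mat_act (?a i j * ?a k l + ?a k l * ?a i j) x"
    unfolding unit_action_def using car[of i j] car[of k l]
    by (simp add: mat_act_mult[of _ "n + n" "n + n"] mat_act_add_mat[of _ "n + n" "n + n"])
  also have "?a i j * ?a k l + ?a k l * ?a i j =
      f (mat_unit n i j * mat_unit n k l + mat_unit n k l * mat_unit n i j)"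
    by (simp add: f_anticommutator)
  also have "\<dots> = f ((if j = k then mat_unit n i l else 0\<^sub>m n n) + (if l = i then mat_unit n k j else 0\<^sub>m n n))"
    using h by (simp add: mat_unit_mult)
  also have "\<dots> = (if j = k then ?a i l else ?O) + (if l = i then ?a k j else ?O)"
    by (subst f_add) (simp_all add: f_zero)
  also have "mat_act \<dots> x = (if j = k then unit_action i l x else 0) + (if l = i then unit_action k j x else 0)"
    unfolding unit_action_def by (subst mat_act_add_mat[of _ "n + n" "n + n"]) (simp_all add: car)
  finally show ?thesis .
qed

lemma symp_jordan_units_unit_action: "symp_jordan_units n unit_action"
proof (intro symp_jordan_units.intro jordan_units.intro symp_jordan_units_axioms.intro)
  fix i j x y
  show "unit_action i j (x + y) = unit_action i j x + unit_action i j y"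
    by (simp add: unit_action_def mat_act_add)
next
  fix i j c x
  show "unit_action i j (\<lambda>r. c * x r) = (\<lambda>r. c * unit_action i j x r)"
    by (simp add: unit_action_def mat_act_scale)
next
  fix i j k l x assume "i < n" "j < n" "k < n" "l < n"
  then show "unit_action i j (unit_action k l x) + unit_action k l (unit_action i j x) =
      (if j = k then unit_action i l x else 0) + (if l = i then unit_action k j x else 0)"
    by (rule unit_action_jordan)
next
  show "(2::'a) \<noteq> 0" by (rule two_neq_zero)
next
  fix i j x y
  show "symp_form n (unit_action i j x) y = symp_form n x (unit_action i j y)"
    using maps_Hj[of "mat_unit n i j"] by (simp add: unit_action_def Hj_iff_symp_form_selfadjoint)
next
  fix r i j x assume "n + n \<le> r"
  then show "unit_action i j x r = 0"
    using f_carrier[of "mat_unit n i j"] by (simp add: unit_action_def mat_act_outside)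
qed

sublocale U: symp_jordan_units n unit_action
  by (rule symp_jordan_units_unit_action)

lemma unit_action_00_nonzero:
  assumes "0 < n"
  obtains g where "unit_action 0 0 g \<noteq> 0"
proof (rule ccontr)
  assume "\<not> thesis"
  then have "mat_act (f (mat_unit n 0 0)) (unit_fun c) = mat_act (0\<^sub>m (n + n) (n + n)) (unit_fun c)" for c
    using that by (auto simp: unit_action_def)
  then have "f (mat_unit n 0 0) = f (0\<^sub>m n n)"
    unfolding f_zero by (intro mat_eqI_mat_act_unit_fun[of _ "n + n" "n + n"]) (simp_all add: f_carrier)
  then have "mat_unit n 0 0 = (0\<^sub>m n n :: 'a mat)" using inj by (simp add: inj_on_def)
  then have "mat_unit n 0 0 $$ (0, 0) = (0\<^sub>m n n :: 'a mat) $$ (0, 0)" by simp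
  then show False using assms by (simp add: mat_unit_def)
qed

definition basis_matrix :: "(nat \<Rightarrow> 'a) \<Rightarrow> (nat \<Rightarrow> 'a) \<Rightarrow> 'a mat" where
  "basis_matrix u w = mat (n + n) (n + n) (\<lambda>(r, c). U.generator_basis u w c r)"

lemma basis_matrix_carrier: "basis_matrix u w \<in> carrier_mat (n + n) (n + n)"
  by (simp add: basis_matrix_def)

lemma mat_act_basis_matrix_unit_fun:
  assumes "c < n + n"
  shows "mat_act (basis_matrix u w) (unit_fun c) = U.generator_basis u w c"
  unfolding mat_act_unit_fun[OF basis_matrix_carrier assms]
  using assms U.generator_basis_support[of _ u w c] by (auto simp: basis_matrix_def not_less intro!: ext)

lemma basis_matrix_intertwines_mat_unit:
  assumes uw: "U.dual_generators u w" and i: "i < n" and j: "j < n"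
  shows "f (mat_unit n i j) * basis_matrix u w = basis_matrix u w * diag_embed n (mat_unit n i j)"
proof (rule mat_eqI_mat_act_unit_fun)
  let ?P = "basis_matrix u w"
  note P = basis_matrix_carrier and D = diag_embed_carrier[OF mat_unit_carrier]
  show "f (mat_unit n i j) * ?P \<in> carrier_mat (n + n) (n + n)"
    using f_carrier[OF mat_unit_carrier] P by (rule mult_carrier_mat)
  show "?P * diag_embed n (mat_unit n i j) \<in> carrier_mat (n + n) (n + n)"
    using P D by (rule mult_carrier_mat)
  fix c assume c: "c < n + n"
  have "mat_act (f (mat_unit n i j) * ?P) (unit_fun c) = unit_action i j (U.generator_basis u w c)"
    using mat_act_mult[OF f_carrier[OF mat_unit_carrier] P] c
    by (simp add: unit_action_def mat_act_basis_matrix_unit_fun)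
  also have "\<dots> = mat_act ?P (mat_act (diag_embed n (mat_unit n i j)) (unit_fun c))"
    using U.T_generator_basis[OF uw i j c] c i j
    by (simp add: mat_act_diag_embed_mat_unit mat_act_basis_matrix_unit_fun)
  also have "\<dots> = mat_act (?P * diag_embed n (mat_unit n i j)) (unit_fun c)"
    by (rule mat_act_mult[OF P D, symmetric])
  finally show "mat_act (f (mat_unit n i j) * ?P) (unit_fun c) =
      mat_act (?P * diag_embed n (mat_unit n i j)) (unit_fun c)" .
qed

lemma intertwiner_exists:
  obtains P where "P \<in> carrier_mat (n + n) (n + n)"
    "\<And>x y. symp_form n (mat_act P x) (mat_act P y) = symp_form n x y"
    "\<And>X. X \<in> carrier_mat n n \<Longrightarrow> f X * P = P * diag_embed n X"
proof (cases "n = 0")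
  case True
  have "f X * 1\<^sub>m (n + n) = 1\<^sub>m (n + n) * diag_embed n X" if "X \<in> carrier_mat n n" for X
    using f_carrier[OF that] diag_embed_carrier[OF that] True by (intro eq_matI) auto
  then show ?thesis using that[of "1\<^sub>m (n + n)"] True by (simp add: symp_form_def)
next
  case False
  then have n: "0 < n" by simp
  obtain g where "unit_action 0 0 g \<noteq> 0" using unit_action_00_nonzero[OF n] .
  then obtain u w where uw: "U.dual_generators u w" using U.dual_generators_exist[OF n] by blast
  let ?P = "basis_matrix u w"
  note P = basis_matrix_carrier[of u w]
  have pres: "symp_form n (mat_act ?P x) (mat_act ?P y) = symp_form n x y" for x y
    by (rule symp_form_preserving_if_unit_fun[OF P])
      (simp add: mat_act_basis_matrix_unit_fun U.symp_form_generator_basis[OF uw])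
  have "f X * ?P = ?P * diag_embed n X" if X: "X \<in> carrier_mat n n" for X
  proof (rule mat_linear_eqI_on_units[where F = "\<lambda>X. f X * ?P" and G = "\<lambda>X. ?P * diag_embed n X"
        and p = "n + n" and q = "n + n", OF _ _ _ _ _ _ _ X])
    fix X Y :: "'a mat" assume X: "X \<in> carrier_mat n n" and Y: "Y \<in> carrier_mat n n"
    show "f (X + Y) * ?P = f X * ?P + f Y * ?P"
      by (simp add: f_add[OF X Y] add_mult_distrib_mat[OF f_carrier[OF X] f_carrier[OF Y] P])
    show "?P * diag_embed n (X + Y) = ?P * diag_embed n X + ?P * diag_embed n Y"
      by (simp add: diag_embed_add[OF X Y] mult_add_distrib_mat[OF P diag_embed_carrier[OF X]
            diag_embed_carrier[OF Y]])
  next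
    fix c and X :: "'a mat" assume X: "X \<in> carrier_mat n n"
    show "f (c \<cdot>\<^sub>m X) * ?P = c \<cdot>\<^sub>m (f X * ?P)"
      by (simp add: f_smult[OF X] mult_smult_assoc_mat[OF f_carrier[OF X] P])
    show "?P * diag_embed n (c \<cdot>\<^sub>m X) = c \<cdot>\<^sub>m (?P * diag_embed n X)"
      by (simp add: diag_embed_smult[OF X] mult_smult_distrib[OF P diag_embed_carrier[OF X]])
    show "f X * ?P \<in> carrier_mat (n + n) (n + n)" "?P * diag_embed n X \<in> carrier_mat (n + n) (n + n)"
      using f_carrier[OF X] diag_embed_carrier[OF X] P by auto
  next
    fix i j assume "i < n" "j < n"
    then show "f (mat_unit n i j) * ?P = ?P * diag_embed n (mat_unit n i j)"
      by (rule basis_matrix_intertwines_mat_unit[OF uw])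
  qed
  then show ?thesis using that P pres by blast
qed

end

theorem lemma2p4:
  fixes n :: nat and J :: "'a::field mat set"
  assumes "alg_closed_field TYPE('a)"
    and "(2::'a) \<noteq> 0"
    and "jordan_subalgebra J (Hj n)"
    and "jordan_isomorphic (carrier_mat n n) J"
  shows "\<exists>\<phi>. jordan_iso (Hj n) (Hj n) \<phi> \<and>
           \<phi> ` J = {four_block_mat X (0\<^sub>m n n) (0\<^sub>m n n) (transpose_mat X) | X.
                     X \<in> carrier_mat n n}"
proof -
  obtain f where f: "bij_betw f (carrier_mat n n) J" "jordan_hom_on (carrier_mat n n) f"
    using assms(4) unfolding jordan_isomorphic_def jordan_iso_def by blast
  have J: "J = f ` carrier_mat n n" using f(1) by (simp add: bij_betw_def)
  interpret Hj_representation n f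
    using assms(2,3) f unfolding jordan_subalgebra_def bij_betw_def by unfold_locales auto
  obtain P where P: "P \<in> carrier_mat (n + n) (n + n)"
    and pres: "\<And>x y. symp_form n (mat_act P x) (mat_act P y) = symp_form n x y"
    and intertwines: "\<And>X. X \<in> carrier_mat n n \<Longrightarrow> f X * P = P * diag_embed n X"
    using intertwiner_exists by blast
  obtain Q where Q: "Q \<in> carrier_mat (n + n) (n + n)" "Q * P = 1\<^sub>m (n + n)" "P * Q = 1\<^sub>m (n + n)"
    using symp_form_preserving_mat_invertible[OF P pres] by blast
  have "Q * f X * P = diag_embed n X" if X: "X \<in> carrier_mat n n" for X
  proof -
    have "Q * f X * P = Q * P * diag_embed n X"
      using f_carrier[OF X] diag_embed_carrier[OF X] P Q(1) by (simp add: intertwines[OF X])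
    then show ?thesis using diag_embed_carrier[OF X] Q(2) by simp
  qed
  then have "(\<lambda>Y. Q * Y * P) ` J = diag_embed n ` carrier_mat n n"
    unfolding J image_image by simp
  then show ?thesis
    using jordan_iso_conj_Hj[OF P Q(1) Q(2) Q(3) pres] unfolding diag_embed_def by blast
qed

end
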